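(* Let $B$ be an $n\times n$ random matrix whose entries are independent Bernoulli random variables with mean $p\in[0,1]$, and let $\varepsilon\in(0,1/2]$. Then with probability at least $1-\exp(-\varepsilon n/2)$, the total number of ones contained in those rows of $B$ that have more than $21pn+2\ln(\varepsilon^{-1})$ ones is at most $\varepsilon n$. *)

theory Defs
  imports "HOL-Probability.Probability"
begin

definition bernoulli_matrix :: "nat \<Rightarrow> real \<Rightarrow> (nat \<times> nat \<Rightarrow> bool) pmf" where
  "bernoulli_matrix n p = Pi_pmf ({..<n} \<times> {..<n}) False (\<lambda>_. bernoulli_pmf p)"

definition row_ones :: "nat \<Rightarrow> (nat \<times> nat \<Rightarrow> bool) \<Rightarrow> nat \<Rightarrow> nat" where
  "row_ones n B i = card {j. j < n \<and> B (i, j)}"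

definition heavy_row_ones :: "nat \<Rightarrow> real \<Rightarrow> (nat \<times> nat \<Rightarrow> bool) \<Rightarrow> nat" where
  "heavy_row_ones n t B = (\<Sum>i\<in>{i. i < n \<and> real (row_ones n B i) > t}. row_ones n B i)"

end

theory Submission
  imports Defs
begin

(* Exponential moment method. A row with X > t ones satisfies e^X <= e^(2X - t), so the total S
   of ones in heavy rows obeys e^S <= prod_i (1 + e^(-t) e^(2 X_i)). By independence of the
   entries the right-hand side has expectation (1 + e^(-t) (1 + p (e^2 - 1))^n)^n, which for the
   given threshold t is at most (1 + eps/2)^n <= e^(eps n / 2); Markov's inequality for e^S
   then bounds the probability that S > eps n by e^(-eps n / 2). *)

lemma finite_set_Pi_pmf:
  assumes "finite A" "\<And>x. x \<in> A \<Longrightarrow> finite (set_pmf (p x))"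
  shows "finite (set_pmf (Pi_pmf A dflt p))"
  using assms by (intro finite_subset[OF set_Pi_pmf_subset' finite_PiE_dflt]) auto

lemma prod_mult_add_one_eq_sum_Pow:
  fixes c :: "'b :: comm_semiring_1"
  assumes "finite I"
  shows "(\<Prod>i\<in>I. c * a i + 1) = (\<Sum>X\<in>Pow I. c ^ card X * (\<Prod>i\<in>X. a i))"
  using assms by (simp add: prod_add prod.distrib)

lemma expectation_prod_subset_Pi_pmf:
  fixes f :: "'b \<Rightarrow> real"
  assumes "finite A" "K \<subseteq> A" "finite (set_pmf q)" "\<And>y. f y \<ge> 0"
  shows "measure_pmf.expectation (Pi_pmf A dflt (\<lambda>_. q)) (\<lambda>B. \<Prod>k\<in>K. f (B k))
           = measure_pmf.expectation q f ^ card K"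
proof -
  define F where "F k y = (if k \<in> K then f y else 1)" for k y
  have restrict: "(\<Prod>k\<in>K. h k) = (\<Prod>k\<in>A. if k \<in> K then h k else 1)" for h :: "'a \<Rightarrow> real"
    using assms(1,2) by (simp add: prod.inter_restrict[symmetric] Int_absorb1)
  have "measure_pmf.expectation (Pi_pmf A dflt (\<lambda>_. q)) (\<lambda>B. \<Prod>k\<in>K. f (B k))
      = measure_pmf.expectation (Pi_pmf A dflt (\<lambda>_. q)) (\<lambda>B. \<Prod>k\<in>A. F k (B k))"
    by (simp add: restrict F_def)
  also have "\<dots> = (\<Prod>k\<in>A. measure_pmf.expectation q (F k))"
    using assms by (intro expectation_prod_Pi_pmf) (auto intro: integrable_measure_pmf_finite simp: F_def)
  also have "\<dots> = (\<Prod>k\<in>A. if k \<in> K then measure_pmf.expectation q f else 1)"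
    by (intro prod.cong) (auto simp: F_def [abs_def])
  also have "\<dots> = measure_pmf.expectation q f ^ card K"
    by (simp flip: restrict)
  finally show ?thesis .
qed

lemma expectation_prod_rows_Pi_pmf:
  fixes f :: "'b \<Rightarrow> real" and c :: real
  assumes "finite I" "finite J" "finite (set_pmf q)" "\<And>y. f y \<ge> 0"
  shows "measure_pmf.expectation (Pi_pmf (I \<times> J) dflt (\<lambda>_. q))
           (\<lambda>B. \<Prod>i\<in>I. c * (\<Prod>j\<in>J. f (B (i, j))) + 1)
         = (c * measure_pmf.expectation q f ^ card J + 1) ^ card I"
proof -
  let ?M = "Pi_pmf (I \<times> J) dflt (\<lambda>_. q)" and ?e = "measure_pmf.expectation q f"
  have fin: "finite (set_pmf ?M)"
    using assms by (intro finite_set_Pi_pmf) auto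
  have block: "measure_pmf.expectation ?M (\<lambda>B. \<Prod>i\<in>X. \<Prod>j\<in>J. f (B (i, j))) = (\<Prod>i\<in>X. ?e ^ card J)"
    if "X \<subseteq> I" for X
  proof -
    have "measure_pmf.expectation ?M (\<lambda>B. \<Prod>i\<in>X. \<Prod>j\<in>J. f (B (i, j)))
        = measure_pmf.expectation ?M (\<lambda>B. \<Prod>k\<in>X \<times> J. f (B k))"
      by (simp add: prod.cartesian_product)
    also have "\<dots> = ?e ^ card (X \<times> J)"
      using that assms by (intro expectation_prod_subset_Pi_pmf) auto
    finally show ?thesis
      by (simp add: card_cartesian_product mult.commute flip: power_mult)
  qed
  \<comment> \<open>Expanding over the sets X of rows picking the c-term makes each summand a product of independent entries.\<close>
  have "measure_pmf.expectation ?M (\<lambda>B. \<Prod>i\<in>I. c * (\<Prod>j\<in>J. f (B (i, j))) + 1)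
      = measure_pmf.expectation ?M (\<lambda>B. \<Sum>X\<in>Pow I. c ^ card X * (\<Prod>i\<in>X. \<Prod>j\<in>J. f (B (i, j))))"
    using assms(1) by (simp add: prod_mult_add_one_eq_sum_Pow)
  also have "\<dots> = (\<Sum>X\<in>Pow I. c ^ card X * measure_pmf.expectation ?M (\<lambda>B. \<Prod>i\<in>X. \<Prod>j\<in>J. f (B (i, j))))"
    using fin by (simp add: integrable_measure_pmf_finite)
  also have "\<dots> = (\<Sum>X\<in>Pow I. c ^ card X * (\<Prod>i\<in>X. ?e ^ card J))"
    by (intro sum.cong refl) (simp add: block)
  also have "\<dots> = (c * ?e ^ card J + 1) ^ card I"
    using prod_mult_add_one_eq_sum_Pow[OF assms(1), where c = c and a = "\<lambda>_. ?e ^ card J"] by simp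
  finally show ?thesis .
qed

lemma prob_le_ge_one_minus_exp_moment:
  fixes M :: "'a pmf" and X :: "'a \<Rightarrow> real"
  assumes "integrable M (\<lambda>x. exp (X x))" "measure_pmf.expectation M (\<lambda>x. exp (X x)) \<le> exp b"
  shows "measure_pmf.prob M {x. X x \<le> a} \<ge> 1 - exp (b - a)"
proof -
  have "measure_pmf.prob M {x. \<not> X x \<le> a} \<le> measure_pmf.prob M {x. exp a \<le> exp (X x)}"
    by (intro measure_pmf.finite_measure_mono) auto
  also have "\<dots> \<le> measure_pmf.expectation M (\<lambda>x. exp (X x)) / exp a"
    using integral_Markov_inequality_measure[of M "\<lambda>x. exp (X x)" UNIV "exp a"] assms(1) by simp
  also have "\<dots> \<le> exp (b - a)"
    using assms(2) by (simp add: exp_diff divide_right_mono)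
  finally show ?thesis
    using measure_pmf.prob_compl[of "{x. \<not> X x \<le> a}" M] by (simp add: set_diff_eq)
qed

lemma exp_sum_above_threshold_le:
  fixes x :: "'a \<Rightarrow> real"
  assumes "finite I"
  shows "exp (\<Sum>i\<in>{i\<in>I. x i > t}. x i) \<le> (\<Prod>i\<in>I. exp (- t) * exp (2 * x i) + 1)"
proof -
  have "exp (\<Sum>i\<in>{i\<in>I. x i > t}. x i) = (\<Prod>i\<in>{i\<in>I. x i > t}. exp (x i))"
    by (simp add: exp_sum assms)
  also have "\<dots> \<le> (\<Prod>i\<in>{i\<in>I. x i > t}. exp (- t) * exp (2 * x i) + 1)"
  proof (intro prod_mono conjI)
    fix i assume "i \<in> {i\<in>I. x i > t}"
    then have "exp (x i) \<le> exp (- t) * exp (2 * x i)"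
      by (simp flip: exp_add)
    then show "exp (x i) \<le> exp (- t) * exp (2 * x i) + 1"
      by simp
  qed simp
  also have "\<dots> \<le> (\<Prod>i\<in>I. exp (- t) * exp (2 * x i) + 1)"
    using assms by (intro prod_mono2) (auto intro: add_nonneg_nonneg)
  finally show ?thesis .
qed

lemma prod_exp_two_row_ones:
  "(\<Prod>j<n. if B (i, j) then exp 2 else 1) = exp (2 * real (row_ones n B i))"
proof -
  have "(\<Prod>j<n. if B (i, j) then exp 2 else 1) = (\<Prod>j\<in>{..<n} \<inter> {j. B (i, j)}. exp (2::real))"
    by (simp only: prod.inter_restrict [OF finite_lessThan] mem_Collect_eq)
  also have "\<dots> = exp 2 ^ row_ones n B i"
    by (simp add: row_ones_def Int_def)
  also have "\<dots> = exp (2 * real (row_ones n B i))"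
    by (simp add: mult.commute flip: exp_of_nat_mult)
  finally show ?thesis .
qed

lemma expectation_exp_heavy_row_ones_le:
  assumes "0 \<le> p" "p \<le> 1"
  shows "measure_pmf.expectation (bernoulli_matrix n p) (\<lambda>B. exp (real (heavy_row_ones n t B)))
           \<le> (exp (- t) * (1 + p * (exp 2 - 1)) ^ n + 1) ^ n"
proof -
  let ?f = "\<lambda>b. if b then exp 2 else 1 :: real" and ?M = "bernoulli_matrix n p"
  have fin: "finite (set_pmf ?M)"
    unfolding bernoulli_matrix_def by (intro finite_set_Pi_pmf) auto
  have "measure_pmf.expectation ?M (\<lambda>B. exp (real (heavy_row_ones n t B)))
      \<le> measure_pmf.expectation ?M (\<lambda>B. \<Prod>i<n. exp (- t) * (\<Prod>j<n. ?f (B (i, j))) + 1)"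
  proof (intro integral_mono)
    fix B
    show "exp (real (heavy_row_ones n t B)) \<le> (\<Prod>i<n. exp (- t) * (\<Prod>j<n. ?f (B (i, j))) + 1)"
      using exp_sum_above_threshold_le[of "{..<n}" "\<lambda>i. real (row_ones n B i)" t]
      by (simp add: heavy_row_ones_def prod_exp_two_row_ones)
  qed (use fin in \<open>auto intro: integrable_measure_pmf_finite\<close>)
  also have "\<dots> = (exp (- t) * measure_pmf.expectation (bernoulli_pmf p) ?f ^ n + 1) ^ n"
    unfolding bernoulli_matrix_def by (subst expectation_prod_rows_Pi_pmf) auto
  also have "measure_pmf.expectation (bernoulli_pmf p) ?f = 1 + p * (exp 2 - 1)"
    using assms by (simp add: algebra_simps)
  finally show ?thesis .
qed

lemma heavy_threshold_moment_le:
  fixes n :: nat and p \<epsilon> :: real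
  assumes "0 \<le> p" "0 < \<epsilon>" "\<epsilon> \<le> 1/2"
  shows "exp (- (21 * p * real n + 2 * ln (1 / \<epsilon>))) * (1 + p * (exp 2 - 1)) ^ n \<le> \<epsilon> / 2"
proof -
  have "exp 2 = exp (1::real) * exp 1"
    by (simp flip: exp_add)
  also have "\<dots> \<le> 3 * 3"
    using exp_le by (intro mult_mono) auto
  finally have "1 + p * (exp 2 - 1) \<le> 1 + 8 * p"
    using assms(1) mult_left_mono[of "exp 2 - 1" 8 p] by simp
  also have "\<dots> \<le> exp (8 * p)"
    using exp_ge_add_one_self by simp
  finally have "(1 + p * (exp 2 - 1)) ^ n \<le> exp (8 * p) ^ n"
    using assms(1) by (intro power_mono) auto
  also have "\<dots> = exp (8 * p * real n)"
    by (simp add: mult.commute flip: exp_of_nat_mult)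
  finally have "(1 + p * (exp 2 - 1)) ^ n \<le> exp (8 * p * real n)" .
  then have "exp (- (21 * p * real n + 2 * ln (1 / \<epsilon>))) * (1 + p * (exp 2 - 1)) ^ n
      \<le> exp (- (21 * p * real n + 2 * ln (1 / \<epsilon>))) * exp (8 * p * real n)"
    by (rule mult_left_mono) simp
  also have "\<dots> = exp (- 13 * p * real n - 2 * ln (1 / \<epsilon>))"
    by (simp add: algebra_simps flip: exp_add)
  also have "\<dots> \<le> exp (- 2 * ln (1 / \<epsilon>))"
    using assms(1) by simp
  also have "\<dots> = \<epsilon> ^ 2"
    using assms(2) exp_of_nat_mult[of 2 "ln \<epsilon>"] by (simp add: ln_div mult.commute)
  also have "\<dots> \<le> \<epsilon> / 2"
    using assms(2,3) by (simp add: power2_eq_square)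
  finally show ?thesis .
qed

theorem mainTheorem14:
  fixes n :: nat and p \<epsilon> :: real
  assumes "0 \<le> p" "p \<le> 1" "0 < \<epsilon>" "\<epsilon> \<le> 1/2"
  shows "measure_pmf.prob (bernoulli_matrix n p)
           {B. real (heavy_row_ones n (21 * p * real n + 2 * ln (1 / \<epsilon>)) B) \<le> \<epsilon> * real n}
         \<ge> 1 - exp (- \<epsilon> * real n / 2)"
proof -
  define t where "t = 21 * p * real n + 2 * ln (1 / \<epsilon>)"
  have "measure_pmf.expectation (bernoulli_matrix n p) (\<lambda>B. exp (real (heavy_row_ones n t B)))
      \<le> (exp (- t) * (1 + p * (exp 2 - 1)) ^ n + 1) ^ n"
    using assms(1,2) by (rule expectation_exp_heavy_row_ones_le)
  also have "\<dots> \<le> (\<epsilon> / 2 + 1) ^ n"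
    using heavy_threshold_moment_le[OF assms(1,3,4), of n] assms(1)
    by (intro power_mono) (auto simp: t_def)
  also have "\<dots> \<le> exp (\<epsilon> / 2) ^ n"
    using assms(3) exp_ge_add_one_self[of "\<epsilon> / 2"] by (intro power_mono) (auto simp: add.commute)
  also have "\<dots> = exp (\<epsilon> * real n / 2)"
    by (simp add: mult.commute flip: exp_of_nat_mult)
  finally have "measure_pmf.prob (bernoulli_matrix n p) {B. real (heavy_row_ones n t B) \<le> \<epsilon> * real n}
      \<ge> 1 - exp (\<epsilon> * real n / 2 - \<epsilon> * real n)"
    by (intro prob_le_ge_one_minus_exp_moment integrable_measure_pmf_finite)
       (auto simp: bernoulli_matrix_def intro: finite_set_Pi_pmf)
  then show ?thesis
    by (simp add: t_def)
qed

end
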